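(* Let $y=\frac{p+q}{2(1+pq)}$ and $C^*=C\!\left(\frac{(p+q)^2}{4(1+pq)^2}\right)$. For every integer $n\ge0$, as formal power series in $p,q$, $$A_{2n+1}(p,q)=A_{2n+1}(yC^* )\left(\frac{1+pq}{C^*}\right)^{n},\qquad A_{2n+2}(p,q)=\frac{1+yC^*}{1+q}A_{2n+2}(yC^* )\left(\frac{1+pq}{C^*}\right)^{n+1}.$$
   Context: For a permutation $\pi=a_1\cdots a_n$ of $[n]$, an index $i\in[n-1]$ is a descent if $a_i>a_{i+1}$; $\mathrm{des}(\pi)$ is the number of descents, and $\mathrm{odes}(\pi)$, $\mathrm{edes}(\pi)$ count descents at odd and even positions. $A_n(p,q)=\sum_{\pi\in\mathfrak S_n}p^{\mathrm{odes}(\pi)}q^{\mathrm{edes}(\pi)}$ and $A_n(q)=\sum_{\pi\in\mathfrak S_n}q^{\mathrm{des}(\pi)}$ is the Eulerian polynomial. $C(y)=\frac{1-\sqrt{1-4y}}{2y}=\sum_{n\ge0}\frac{1}{n+1}\binom{2n}{n}y^n$. *)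

theory Defs
  imports Complex_Main "HOL-Combinatorics.Permutations"
begin

definition descents :: "nat \<Rightarrow> (nat \<Rightarrow> nat) \<Rightarrow> nat set" where
  "descents n \<pi> = {i \<in> {1..<n}. \<pi> i > \<pi> (Suc i)}"

definition des :: "nat \<Rightarrow> (nat \<Rightarrow> nat) \<Rightarrow> nat" where
  "des n \<pi> = card (descents n \<pi>)"

definition odes :: "nat \<Rightarrow> (nat \<Rightarrow> nat) \<Rightarrow> nat" where
  "odes n \<pi> = card {i \<in> descents n \<pi>. odd i}"

definition edes :: "nat \<Rightarrow> (nat \<Rightarrow> nat) \<Rightarrow> nat" where
  "edes n \<pi> = card {i \<in> descents n \<pi>. even i}"

definition Apq :: "nat \<Rightarrow> real \<Rightarrow> real \<Rightarrow> real" where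
  "Apq n p q = (\<Sum>\<pi> \<in> {\<pi>. \<pi> permutes {1..n}}. p ^ odes n \<pi> * q ^ edes n \<pi>)"

definition eulerian :: "nat \<Rightarrow> real \<Rightarrow> real" where
  "eulerian n t = (\<Sum>\<pi> \<in> {\<pi>. \<pi> permutes {1..n}}. t ^ des n \<pi>)"

text \<open>Catalan generating function C(y) = (1 - sqrt(1-4y))/(2y), with C(0) = 1
  (its value as a power series, convergent for |y| < 1/4).\<close>
definition catC :: "real \<Rightarrow> real" where
  "catC y = (if y = 0 then 1 else (1 - sqrt (1 - 4*y)) / (2*y))"

end

theory Submission
  imports Defs "HOL-Computational_Algebra.Formal_Power_Series"
begin

text \<open>Removing the last letter of a permutation and recording its value yields the recurrence
  \<open>A_n(p,q) = \<Sum>_{m<n} C(n,m) \<rho>_m A_m(p,q) \<Prod>_{m<l<n} (1 - r_l)\<close>, where \<open>r_l\<close> is \<open>p\<close> for odd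
  \<open>l\<close> and \<open>q\<close> for even \<open>l\<close>, \<open>\<rho>_0 = 1\<close> and \<open>\<rho>_m = r_m\<close>; for \<open>p = q = t\<close> it is the Eulerian
  recurrence. The exponential generating function \<open>A(x)\<close> of the Eulerian polynomials satisfies
  \<open>A(x)(1 - t e^((1-t)x)) = (1 - t) e^((1-t)x)\<close>, and comparing \<open>A(x)\<close> with \<open>A(-x)\<close> gives, for each
  parity of \<open>n\<close>, a linear relation between the odd- and even-indexed terms of the Eulerian
  recurrence.

  If \<open>\<mu>\<^sup>2 (1 - t)\<^sup>2 = (1 - p)(1 - q)\<close> and \<open>\<mu>\<^sup>2 (1 + t)\<^sup>2 = (1 + p)(1 + q)\<close>, the factors \<open>1 - r_l\<close> pair up
  into powers of \<open>\<mu>(1 - t)\<close>, and these relations turn the recurrence for \<open>A_n(p,q)\<close> into the one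
  for \<open>A_n(t)\<close>: by strong induction \<open>A_n(p,q) = \<mu>^n c_n A_n(t)\<close> with \<open>c_n = 1/\<mu>\<close> for odd \<open>n\<close> and
  \<open>c_n = (1 + t)/(1 + q)\<close> for even \<open>n > 0\<close>. Finally \<open>t = y C\<^sup>*\<close> and \<open>\<mu>\<^sup>2 = (1 + pq)/C\<^sup>*\<close> satisfy
  both equations because \<open>C\<^sup>* = 1 + (y C\<^sup>*)\<^sup>2\<close> is the Catalan equation \<open>C = 1 + z C\<^sup>2\<close> at \<open>z = y\<^sup>2\<close>.\<close>

section \<open>Descent weights and the last-letter recurrence\<close>

definition descent_weight :: "real \<Rightarrow> real \<Rightarrow> nat \<Rightarrow> real" where
  "descent_weight p q i = (if odd i then p else q)"

definition perm_weight :: "real \<Rightarrow> real \<Rightarrow> nat \<Rightarrow> (nat \<Rightarrow> nat) \<Rightarrow> real" where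
  "perm_weight p q n \<pi> = (\<Prod>i\<in>descents n \<pi>. descent_weight p q i)"

lemma finite_descents [simp]: "finite (descents n \<pi>)"
  by (simp add: descents_def)

lemma perm_weight_eq: "perm_weight p q n \<pi> = p ^ odes n \<pi> * q ^ edes n \<pi>"
proof -
  have split: "descents n \<pi> = {i \<in> descents n \<pi>. odd i} \<union> {i \<in> descents n \<pi>. even i}"
    by auto
  have "perm_weight p q n \<pi> =
      (\<Prod>i | i \<in> descents n \<pi> \<and> odd i. descent_weight p q i) *
      (\<Prod>i | i \<in> descents n \<pi> \<and> even i. descent_weight p q i)"
    unfolding perm_weight_def by (subst split, rule prod.union_disjoint) auto
  also have "\<dots> = (\<Prod>i | i \<in> descents n \<pi> \<and> odd i. p) * (\<Prod>i | i \<in> descents n \<pi> \<and> even i. q)"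
    by (intro arg_cong2[where f = "(*)"] prod.cong) (auto simp: descent_weight_def)
  finally show ?thesis
    by (simp add: odes_def edes_def)
qed

lemma perm_weight_diagonal: "perm_weight t t n \<pi> = t ^ des n \<pi>"
  by (simp add: perm_weight_def descent_weight_def des_def)

lemma Apq_eq_sum_perm_weight: "Apq n p q = (\<Sum>\<pi> | \<pi> permutes {1..n}. perm_weight p q n \<pi>)"
  by (simp add: Apq_def perm_weight_eq)

lemma eulerian_eq_Apq: "eulerian n t = Apq n t t"
  by (simp add: eulerian_def Apq_eq_sum_perm_weight perm_weight_diagonal)

lemma finite_permutations_interval [simp]: "finite {\<sigma>. \<sigma> permutes {m..n::nat}}"
  by (simp add: finite_permutations)

lemma Apq_0: "Apq 0 p q = 1"
  by (simp add: Apq_eq_sum_perm_weight perm_weight_def descents_def)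

text \<open>\<open>insert_last n j \<sigma>\<close> is the permutation of \<open>{1..n+1}\<close> ending with \<open>j\<close> whose first
  \<open>n\<close> values are in the same relative order as those of \<open>\<sigma>\<close>; \<open>delete_last\<close> inverts it.\<close>

definition insert_last :: "nat \<Rightarrow> nat \<Rightarrow> (nat \<Rightarrow> nat) \<Rightarrow> nat \<Rightarrow> nat" where
  "insert_last n j \<sigma> = (\<lambda>i. if i = Suc n then j
     else if i \<in> {1..n} then (if \<sigma> i < j then \<sigma> i else Suc (\<sigma> i)) else i)"

definition delete_last :: "nat \<Rightarrow> (nat \<Rightarrow> nat) \<Rightarrow> nat \<Rightarrow> nat" where
  "delete_last n \<pi> = (\<lambda>i. if i \<in> {1..n} then (if \<pi> i < \<pi> (Suc n) then \<pi> i else \<pi> i - 1) else i)"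

lemma insert_last_Suc [simp]: "insert_last n j \<sigma> (Suc n) = j"
  by (simp add: insert_last_def)

lemma insert_last_permutes:
  assumes \<sigma>: "\<sigma> permutes {1..n}" and j: "j \<in> {1..Suc n}"
  shows "insert_last n j \<sigma> permutes {1..Suc n}"
proof (rule inj_imp_permutes)
  have \<sigma>_in: "\<sigma> i \<in> {1..n}" if "i \<in> {1..n}" for i
    using permutes_in_image[OF \<sigma>] that by simp
  show "inj_on (insert_last n j \<sigma>) {1..Suc n}"
  proof (rule inj_onI)
    fix x y assume "x \<in> {1..Suc n}" "y \<in> {1..Suc n}" "insert_last n j \<sigma> x = insert_last n j \<sigma> y"
    then show "x = y"
      using permutes_inj[OF \<sigma>] by (auto simp: insert_last_def inj_eq split: if_splits)
  qed
  show "insert_last n j \<sigma> x \<in> {1..Suc n}" if "x \<in> {1..Suc n}" for x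
    using that j \<sigma>_in[of x] by (auto simp: insert_last_def)
qed (auto simp: insert_last_def)

lemma delete_last_permutes:
  assumes \<pi>: "\<pi> permutes {1..Suc n}"
  shows "delete_last n \<pi> permutes {1..n}"
proof (rule inj_imp_permutes)
  have \<pi>_in: "\<pi> i \<in> {1..Suc n}" if "i \<in> {1..Suc n}" for i
    using permutes_in_image[OF \<pi>] that by simp
  have \<pi>_ne: "\<pi> i \<noteq> \<pi> (Suc n)" if "i \<in> {1..n}" for i
    using permutes_inj[OF \<pi>] that by (auto simp: inj_eq)
  show "inj_on (delete_last n \<pi>) {1..n}"
  proof (rule inj_onI)
    fix x y assume x: "x \<in> {1..n}" and y: "y \<in> {1..n}" and eq: "delete_last n \<pi> x = delete_last n \<pi> y"
    have "\<pi> x = \<pi> y"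
      using eq \<pi>_ne[OF x] \<pi>_ne[OF y] \<pi>_in[of x] \<pi>_in[of y] x y
      by (auto simp: delete_last_def split: if_splits)
    then show "x = y"
      using permutes_inj[OF \<pi>] by (auto simp: inj_eq)
  qed
  show "delete_last n \<pi> x \<in> {1..n}" if "x \<in> {1..n}" for x
    using that \<pi>_ne[OF that] \<pi>_in[of x] \<pi>_in[of "Suc n"] by (auto simp: delete_last_def)
qed (auto simp: delete_last_def)

lemma insert_delete_last:
  assumes \<pi>: "\<pi> permutes {1..Suc n}"
  shows "insert_last n (\<pi> (Suc n)) (delete_last n \<pi>) = \<pi>"
proof
  fix i
  show "insert_last n (\<pi> (Suc n)) (delete_last n \<pi>) i = \<pi> i"
  proof (cases "i \<in> {1..n}")
    case True
    then have "\<pi> i \<noteq> \<pi> (Suc n)" "\<pi> i \<ge> 1"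
      using permutes_inj[OF \<pi>] permutes_in_image[OF \<pi>, of i] by (auto simp: inj_eq)
    then show ?thesis
      using True by (auto simp: insert_last_def delete_last_def)
  next
    case False
    then show ?thesis
      using permutes_not_in[OF \<pi>, of i] by (auto simp: insert_last_def delete_last_def)
  qed
qed

lemma delete_insert_last:
  assumes "\<sigma> permutes {1..n}"
  shows "delete_last n (insert_last n j \<sigma>) = \<sigma>"
  using permutes_not_in[OF assms] by (auto simp: insert_last_def delete_last_def)

lemma sum_permutes_Suc:
  "(\<Sum>\<pi> | \<pi> permutes {1..Suc n}. f \<pi>) =
   (\<Sum>j\<in>{1..Suc n}. \<Sum>\<sigma> | \<sigma> permutes {1..n}. f (insert_last n j \<sigma>))"
proof -
  have "bij_betw (\<lambda>(j, \<sigma>). insert_last n j \<sigma>)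
      ({1..Suc n} \<times> {\<sigma>. \<sigma> permutes {1..n}}) {\<pi>. \<pi> permutes {1..Suc n}}"
  proof (rule bij_betw_byWitness[where f' = "\<lambda>\<pi>. (\<pi> (Suc n), delete_last n \<pi>)"])
    show "(\<lambda>\<pi>. (\<pi> (Suc n), delete_last n \<pi>)) ` {\<pi>. \<pi> permutes {1..Suc n}}
        \<subseteq> {1..Suc n} \<times> {\<sigma>. \<sigma> permutes {1..n}}"
      using delete_last_permutes permutes_in_image by fastforce
    show "(\<lambda>(j, \<sigma>). insert_last n j \<sigma>) ` ({1..Suc n} \<times> {\<sigma>. \<sigma> permutes {1..n}})
        \<subseteq> {\<pi>. \<pi> permutes {1..Suc n}}"
      using insert_last_permutes by (auto simp del: atLeastAtMost_iff)
  qed (auto simp: delete_insert_last insert_delete_last)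
  then show ?thesis
    by (simp add: sum.cartesian_product sum.reindex_bij_betw[symmetric] case_prod_beta)
qed

lemma descents_insert_last:
  "descents (Suc n) (insert_last n j \<sigma>) =
     descents n \<sigma> \<union> (if 1 \<le> n \<and> j \<le> \<sigma> n then {n} else {})"
  by (auto simp: descents_def insert_last_def)

lemma perm_weight_insert_last:
  "perm_weight p q (Suc n) (insert_last n j \<sigma>) =
     perm_weight p q n \<sigma> * (if 1 \<le> n \<and> j \<le> \<sigma> n then descent_weight p q n else 1)"
proof -
  have "n \<notin> descents n \<sigma>"
    by (simp add: descents_def)
  then show ?thesis
    by (auto simp: perm_weight_def descents_insert_last mult.commute)
qed

definition last_value_weight :: "real \<Rightarrow> real \<Rightarrow> nat \<Rightarrow> nat \<Rightarrow> real" where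
  "last_value_weight p q n k = (\<Sum>\<sigma> | \<sigma> permutes {1..n} \<and> \<sigma> n = k. perm_weight p q n \<sigma>)"

lemma sum_perm_weight_by_last_value:
  assumes "1 \<le> n"
  shows "(\<Sum>\<sigma> | \<sigma> permutes {1..n}. perm_weight p q n \<sigma> * h (\<sigma> n)) =
    (\<Sum>k\<in>{1..n}. last_value_weight p q n k * h k)"
proof -
  have "(\<lambda>\<sigma>. \<sigma> n) ` {\<sigma>. \<sigma> permutes {1..n}} \<subseteq> {1..n}"
    using assms permutes_in_image by fastforce
  from sum.group[OF finite_permutations_interval finite_atLeastAtMost this,
      of "\<lambda>\<sigma>. perm_weight p q n \<sigma> * h (\<sigma> n)"]
  have "(\<Sum>\<sigma> | \<sigma> permutes {1..n}. perm_weight p q n \<sigma> * h (\<sigma> n)) =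
      (\<Sum>k\<in>{1..n}. \<Sum>\<sigma> | \<sigma> permutes {1..n} \<and> \<sigma> n = k. perm_weight p q n \<sigma> * h (\<sigma> n))"
    by (simp only: mem_Collect_eq)
  also have "\<dots> = (\<Sum>k\<in>{1..n}. last_value_weight p q n k * h k)"
    unfolding last_value_weight_def sum_distrib_right by (intro sum.cong) auto
  finally show ?thesis .
qed

lemma Apq_eq_sum_last_value_weight:
  "1 \<le> n \<Longrightarrow> Apq n p q = (\<Sum>k\<in>{1..n}. last_value_weight p q n k)"
  using sum_perm_weight_by_last_value[of n p q "\<lambda>_. 1"] by (simp add: Apq_eq_sum_perm_weight)

lemma last_value_weight_1_1: "last_value_weight p q 1 1 = 1"
proof -
  have "{\<sigma>. \<sigma> permutes {1..1::nat} \<and> \<sigma> 1 = 1} = {id}"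
    by auto
  then show ?thesis
    by (simp add: last_value_weight_def perm_weight_def descents_def)
qed

lemma last_value_weight_Suc:
  assumes n: "1 \<le> n" and k: "k \<in> {1..Suc n}"
  shows "last_value_weight p q (Suc n) k =
    descent_weight p q n * Apq n p q +
    (1 - descent_weight p q n) * (\<Sum>k'\<in>{1..k - 1}. last_value_weight p q n k')"
proof -
  let ?r = "descent_weight p q n"
  have "last_value_weight p q (Suc n) k =
      (\<Sum>\<pi> | \<pi> permutes {1..Suc n}. if \<pi> (Suc n) = k then perm_weight p q (Suc n) \<pi> else 0)"
    unfolding last_value_weight_def by (rule sum.mono_neutral_cong_left) auto
  also have "\<dots> = (\<Sum>j\<in>{1..Suc n}.
      if j = k then (\<Sum>\<sigma> | \<sigma> permutes {1..n}. perm_weight p q (Suc n) (insert_last n j \<sigma>)) else 0)"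
    unfolding sum_permutes_Suc by (intro sum.cong refl) auto
  also have "\<dots> = (\<Sum>\<sigma> | \<sigma> permutes {1..n}. perm_weight p q (Suc n) (insert_last n k \<sigma>))"
    by (simp only: sum.delta[OF finite_atLeastAtMost] k if_True)
  also have "\<dots> = (\<Sum>\<sigma> | \<sigma> permutes {1..n}.
      perm_weight p q n \<sigma> * (?r + (if \<sigma> n < k then 1 - ?r else 0)))"
    using n by (intro sum.cong) (auto simp: perm_weight_insert_last)
  also have "\<dots> = (\<Sum>k'\<in>{1..n}. last_value_weight p q n k' * (?r + (if k' < k then 1 - ?r else 0)))"
    by (rule sum_perm_weight_by_last_value[OF n])
  also have "\<dots> = ?r * (\<Sum>k'\<in>{1..n}. last_value_weight p q n k') +
      (1 - ?r) * (\<Sum>k'\<in>{1..n}. if k' < k then last_value_weight p q n k' else 0)"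
    unfolding sum_distrib_left sum.distrib[symmetric] by (intro sum.cong) (auto simp: algebra_simps)
  also have "(\<Sum>k'\<in>{1..n}. if k' < k then last_value_weight p q n k' else 0) =
      (\<Sum>k'\<in>{1..k - 1}. last_value_weight p q n k')"
  proof -
    have "{k' \<in> {1..n}. k' < k} = {1..k - 1}"
      using k by auto
    then show ?thesis
      by (simp add: sum.inter_filter[symmetric])
  qed
  finally show ?thesis
    using Apq_eq_sum_last_value_weight[OF n] by simp
qed

lemma sum_choose_lessThan: "(\<Sum>k<n. k choose m) = n choose Suc m"
  by (cases n) (simp_all add: lessThan_Suc_atMost sum_choose_upper)

lemma sum_choose_shifted: "(\<Sum>k\<in>{1..n}. real ((k - 1) choose m)) = real (n choose Suc m)"
proof -
  have "(\<Sum>k\<in>{1..n}. (k - 1) choose m) = n choose Suc m"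
    using sum.atLeast1_atMost_eq[of "\<lambda>k. (k - 1) choose m" n] by (simp add: sum_choose_lessThan)
  then show ?thesis
    by (metis of_nat_sum)
qed

definition ascent_prod :: "real \<Rightarrow> real \<Rightarrow> nat \<Rightarrow> nat \<Rightarrow> real" where
  "ascent_prod p q a b = (\<Prod>l\<in>{a..<b}. 1 - descent_weight p q l)"

definition join_weight :: "real \<Rightarrow> real \<Rightarrow> nat \<Rightarrow> real" where
  "join_weight p q m = (if m = 0 then 1 else descent_weight p q m)"

lemma ascent_prod_Suc:
  "a \<le> b \<Longrightarrow> ascent_prod p q a (Suc b) = ascent_prod p q a b * (1 - descent_weight p q b)"
  by (simp add: ascent_prod_def prod.atLeastLessThan_Suc)

lemma last_value_weight_closed_form:
  assumes "1 \<le> n" "k \<in> {1..n}"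
  shows "last_value_weight p q n k = (\<Sum>m<n. real ((k - 1) choose (n - 1 - m)) *
    ascent_prod p q (Suc m) n * join_weight p q m * Apq m p q)"
  using assms
proof (induction n arbitrary: k rule: nat_induct_at_least)
  case base
  then show ?case
    using last_value_weight_1_1[of p q] by (simp add: ascent_prod_def join_weight_def Apq_0)
next
  case (Suc n)
  let ?r = "descent_weight p q n"
  define X where "X m = ascent_prod p q (Suc m) n * join_weight p q m * Apq m p q" for m
  have "(\<Sum>k'\<in>{1..k - 1}. last_value_weight p q n k') =
      (\<Sum>k'\<in>{1..k - 1}. \<Sum>m<n. real ((k' - 1) choose (n - 1 - m)) * X m)"
    using Suc by (intro sum.cong) (auto simp: X_def mult.assoc)
  also have "\<dots> = (\<Sum>m<n. (\<Sum>k'\<in>{1..k - 1}. real ((k' - 1) choose (n - 1 - m))) * X m)"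
    by (subst sum.swap) (simp only: sum_distrib_right)
  also have "\<dots> = (\<Sum>m<n. real ((k - 1) choose (n - m)) * X m)"
  proof (intro sum.cong refl)
    fix m assume "m \<in> {..<n}"
    then have "Suc (n - 1 - m) = n - m"
      by auto
    then show "(\<Sum>k'\<in>{1..k - 1}. real ((k' - 1) choose (n - 1 - m))) * X m =
        real ((k - 1) choose (n - m)) * X m"
      by (simp only: sum_choose_shifted)
  qed
  finally have "last_value_weight p q (Suc n) k =
      ?r * Apq n p q + (\<Sum>m<n. real ((k - 1) choose (n - m)) * ((1 - ?r) * X m))"
    using Suc by (simp add: last_value_weight_Suc sum_distrib_left mult_ac)
  also have "\<dots> = (\<Sum>m<Suc n. real ((k - 1) choose (Suc n - 1 - m)) *
      ascent_prod p q (Suc m) (Suc n) * join_weight p q m * Apq m p q)"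
    using Suc.hyps by (simp add: X_def ascent_prod_Suc ascent_prod_def join_weight_def mult_ac)
  finally show ?case .
qed

lemma Apq_recurrence:
  assumes "1 \<le> n"
  shows "Apq n p q = (\<Sum>m<n. real (n choose m) *
    ascent_prod p q (Suc m) n * join_weight p q m * Apq m p q)"
proof -
  define X where "X m = ascent_prod p q (Suc m) n * join_weight p q m * Apq m p q" for m
  have "Apq n p q = (\<Sum>k\<in>{1..n}. \<Sum>m<n. real ((k - 1) choose (n - 1 - m)) * X m)"
    using assms by (simp add: Apq_eq_sum_last_value_weight last_value_weight_closed_form X_def mult.assoc)
  also have "\<dots> = (\<Sum>m<n. (\<Sum>k\<in>{1..n}. real ((k - 1) choose (n - 1 - m))) * X m)"
    by (subst sum.swap) (simp only: sum_distrib_right)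
  also have "\<dots> = (\<Sum>m<n. real (n choose m) * X m)"
  proof (intro sum.cong refl)
    fix m assume "m \<in> {..<n}"
    then have "n choose Suc (n - 1 - m) = n choose m"
      using binomial_symmetric[of m n] by (simp add: Suc_diff_Suc)
    then show "(\<Sum>k\<in>{1..n}. real ((k - 1) choose (n - 1 - m))) * X m = real (n choose m) * X m"
      by (simp only: sum_choose_shifted)
  qed
  finally show ?thesis
    by (simp add: X_def mult.assoc)
qed

section \<open>The exponential generating function of the Eulerian polynomials\<close>

lemma eulerian_0: "eulerian 0 t = 1"
  by (simp add: eulerian_eq_Apq Apq_0)

lemma eulerian_recurrence:
  assumes "1 \<le> N"
  shows "eulerian N t =
    (\<Sum>m<N. real (N choose m) * eulerian m t * (1 - t) ^ (N - 1 - m) * join_weight t t m)"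
proof -
  have "ascent_prod t t (Suc m) N = (1 - t) ^ (N - 1 - m)" for m
    by (simp add: ascent_prod_def descent_weight_def)
  then show ?thesis
    using Apq_recurrence[OF assms, of t t] by (simp add: eulerian_eq_Apq mult_ac)
qed

lemma eulerian_egf_coeff:
  "eulerian N t = (1 - t) ^ Suc N + t * (\<Sum>i\<le>N. real (N choose i) * eulerian i t * (1 - t) ^ (N - i))"
proof (cases "N = 0")
  case True
  then show ?thesis
    by (simp add: eulerian_0)
next
  case False
  define G where "G i = real (N choose i) * eulerian i t * (1 - t) ^ (N - i)" for i
  have "(1 - t) * eulerian N t =
      (\<Sum>m<N. (1 - t) * (real (N choose m) * eulerian m t * (1 - t) ^ (N - 1 - m) * join_weight t t m))"
    using eulerian_recurrence[of N t] False by (simp add: sum_distrib_left)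
  also have "\<dots> = (\<Sum>m<N. G m * join_weight t t m)"
    by (intro sum.cong refl) (auto simp: G_def power_Suc[symmetric] Suc_diff_Suc mult_ac)
  also have "\<dots> = (\<Sum>m<N. t * G m + (if m = 0 then (1 - t) * (1 - t) ^ N else 0))"
    by (intro sum.cong refl) (auto simp: G_def join_weight_def descent_weight_def eulerian_0 algebra_simps)
  also have "\<dots> = t * (\<Sum>m<N. G m) + (1 - t) ^ Suc N"
    using False by (simp add: sum.distrib sum_distrib_left)
  finally show ?thesis
    by (simp add: lessThan_Suc_atMost[symmetric] G_def algebra_simps)
qed

lemma power_diff_Suc: "i < N \<Longrightarrow> x ^ (N - i) = x * x ^ (N - 1 - i)" for x :: "'a::monoid_mult"
  by (metis Suc_diff_Suc diff_Suc_1 diff_diff_left plus_1_eq_Suc power_Suc)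

lemma sum_binomial_split_last:
  fixes x :: "'a::comm_ring_1"
  shows "(\<Sum>i\<le>N. of_nat (N choose i) * h i * x ^ (N - i)) =
    x * (\<Sum>i<N. of_nat (N choose i) * h i * x ^ (N - 1 - i)) + h N"
proof -
  have "(\<Sum>i<N. of_nat (N choose i) * h i * x ^ (N - i)) =
      x * (\<Sum>i<N. of_nat (N choose i) * h i * x ^ (N - 1 - i))"
    unfolding sum_distrib_left
  proof (intro sum.cong refl)
    fix i assume "i \<in> {..<N}"
    then have "x ^ (N - i) = x * x ^ (N - 1 - i)"
      by (simp add: power_diff_Suc)
    then show "of_nat (N choose i) * h i * x ^ (N - i) = x * (of_nat (N choose i) * h i * x ^ (N - 1 - i))"
      by (simp add: mult_ac)
  qed
  then show ?thesis
    by (simp add: lessThan_Suc_atMost[symmetric])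
qed

lemma fps_nth_egf_times_exp:
  fixes h :: "nat \<Rightarrow> 'a::field_char_0"
  shows "fps_nth (Abs_fps (\<lambda>n. h n / fact n) * fps_exp c) N =
    (\<Sum>i\<le>N. of_nat (N choose i) * h i * c ^ (N - i)) / fact N"
proof -
  have "fps_nth (Abs_fps (\<lambda>n. h n / fact n) * fps_exp c) N =
      (\<Sum>i\<le>N. h i / fact i * (c ^ (N - i) / fact (N - i)))"
    by (simp add: fps_mult_nth atLeast0AtMost)
  also have "\<dots> = (\<Sum>i\<le>N. of_nat (N choose i) * h i * c ^ (N - i) / fact N)"
    by (intro sum.cong refl) (simp add: binomial_fact field_simps)
  finally show ?thesis
    by (simp add: sum_divide_distrib)
qed

lemma fps_nth_reflect: "fps_nth (f oo - fps_X) n = (-1) ^ n * fps_nth (f :: 'a::comm_ring_1 fps) n"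
  by (simp add: fps_compose_uminus')

lemma exp_reflected_inverse: "fps_exp (1 - t) * fps_exp (t - 1) = (1 :: real fps)"
  by (simp add: fps_exp_add_mult[symmetric])

text \<open>Read \<open>Fo\<close>, \<open>Fe\<close> as the odd and even parts of the Eulerian EGF, \<open>E = e^((1-t)x)\<close>,
  \<open>E' = E(-x)\<close> and \<open>T = t\<close>. Then the series \<open>(1 + T)(Fo E - Fo) - (1 - T)(Fe E - E)\<close> is even,
  and \<open>(1 - T) Fo E - (1 + T)(Fe E - Fe - E) - 2E\<close> plus its reflection is \<open>-2(1 - T)\<close>; their
  coefficients are the linear relations between odd- and even-indexed Eulerian terms.\<close>

lemma reflection_identity_odd:
  fixes Fo Fe E E' T :: "'a::idom"
  assumes "(Fo + Fe) * (1 - T * E) = (1 - T) * E" "(Fe - Fo) * (1 - T * E') = (1 - T) * E'" "E * E' = 1"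
  shows "(1 - T * E) * (1 - T * E') * ((1 + T) * (Fo * E - Fo) - (1 - T) * (Fe * E - E)
    - ((1 + T) * (Fo - Fo * E') - (1 - T) * (Fe * E' - E'))) = 0"
  using assms by algebra

lemma reflection_identity_even:
  fixes Fo Fe E E' T :: "'a::idom"
  assumes "(Fo + Fe) * (1 - T * E) = (1 - T) * E" "(Fe - Fo) * (1 - T * E') = (1 - T) * E'" "E * E' = 1"
  shows "(1 - T * E) * (1 - T * E') * ((1 - T) * Fo * E - (1 + T) * (Fe * E - Fe - E) - 2 * E
    + (- ((1 - T) * Fo * E') - (1 + T) * (Fe * E' - Fe - E') - 2 * E') + 2 * (1 - T)) = 0"
  using assms by algebra

locale eulerian_egf =
  fixes t :: real
  assumes t_ne_1: "t \<noteq> 1"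
begin

definition odd_egf :: "real fps" where
  "odd_egf = Abs_fps (\<lambda>n. (if odd n then eulerian n t else 0) / fact n)"

definition even_egf :: "real fps" where
  "even_egf = Abs_fps (\<lambda>n. (if even n then eulerian n t else 0) / fact n)"

definition odd_part_sum :: "nat \<Rightarrow> real" where
  "odd_part_sum N =
    (\<Sum>m<N. if odd m then real (N choose m) * eulerian m t * (1 - t) ^ (N - 1 - m) else 0)"

definition even_part_sum :: "nat \<Rightarrow> real" where
  "even_part_sum N =
    (\<Sum>m<N. if even m \<and> 0 < m then real (N choose m) * eulerian m t * (1 - t) ^ (N - 1 - m) else 0)"

lemma egf_equation:
  "(odd_egf + even_egf) * (1 - fps_const t * fps_exp (1 - t)) = (1 - fps_const t) * fps_exp (1 - t)"
proof -
  define A where "A = odd_egf + even_egf"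
  have A: "A = Abs_fps (\<lambda>n. eulerian n t / fact n)"
    by (rule fps_ext) (simp add: A_def odd_egf_def even_egf_def)
  have "fps_nth (A * (1 - fps_const t * fps_exp (1 - t))) N =
      fps_nth ((1 - fps_const t) * fps_exp (1 - t)) N" for N
  proof -
    define S where "S = (\<Sum>i\<le>N. real (N choose i) * eulerian i t * (1 - t) ^ (N - i))"
    have "fps_nth (A * fps_exp (1 - t)) N = S / fact N"
      by (simp add: A fps_nth_egf_times_exp S_def)
    then have "fps_nth (A * (1 - fps_const t * fps_exp (1 - t))) N = (eulerian N t - t * S) / fact N"
      by (simp add: algebra_simps diff_divide_distrib A)
    also have "\<dots> = (1 - t) * (1 - t) ^ N / fact N"
      using eulerian_egf_coeff[of N t] by (simp add: S_def)
    also have "\<dots> = fps_nth ((1 - fps_const t) * fps_exp (1 - t)) N"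
      by (simp add: algebra_simps fps_exp_nth) (simp add: field_simps)
    finally show ?thesis .
  qed
  then show ?thesis
    unfolding A_def[symmetric] by (simp add: fps_eq_iff)
qed

lemma odd_egf_reflect: "odd_egf oo - fps_X = - odd_egf"
  by (rule fps_ext) (simp add: fps_compose_uminus' odd_egf_def)

lemma even_egf_reflect: "even_egf oo - fps_X = even_egf"
  by (rule fps_ext) (simp add: fps_compose_uminus' even_egf_def)

lemmas reflect_simps = fps_compose_add_distrib fps_compose_sub_distrib fps_compose_uminus
  fps_compose_mult_distrib[of "- fps_X"] odd_egf_reflect even_egf_reflect

lemma egf_equation_reflected:
  "(even_egf - odd_egf) * (1 - fps_const t * fps_exp (t - 1)) = (1 - fps_const t) * fps_exp (t - 1)"
  using arg_cong[OF egf_equation, of "\<lambda>f. f oo - fps_X"] by (simp add: reflect_simps)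

lemma cancel_egf_denominators:
  fixes Z :: "real fps"
  assumes "(1 - fps_const t * fps_exp (1 - t)) * (1 - fps_const t * fps_exp (t - 1)) * Z = 0"
  shows "Z = 0"
proof -
  have "fps_nth ((1 - fps_const t * fps_exp (1 - t)) * (1 - fps_const t * fps_exp (t - 1))) 0 \<noteq> 0"
    using t_ne_1 by simp
  then show ?thesis
    using assms by (metis fps_nonzero_nth mult_eq_0_iff)
qed

lemma odd_egf_times_exp_nth:
  "fps_nth (odd_egf * fps_exp (1 - t)) N * fact N =
    (1 - t) * odd_part_sum N + (if odd N then eulerian N t else 0)"
proof -
  have "fps_nth (odd_egf * fps_exp (1 - t)) N * fact N =
      (\<Sum>i\<le>N. real (N choose i) * (if odd i then eulerian i t else 0) * (1 - t) ^ (N - i))"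
    by (simp add: odd_egf_def fps_nth_egf_times_exp)
  also have "\<dots> = (1 - t) * odd_part_sum N + (if odd N then eulerian N t else 0)"
    unfolding sum_binomial_split_last odd_part_sum_def
    by (intro arg_cong2[where f = "(+)"] arg_cong2[where f = "(*)"] sum.cong refl) auto
  finally show ?thesis .
qed

lemma even_egf_times_exp_nth:
  assumes "1 \<le> N"
  shows "fps_nth (even_egf * fps_exp (1 - t)) N * fact N =
    (1 - t) * even_part_sum N + (1 - t) ^ N + (if even N then eulerian N t else 0)"
proof -
  have "fps_nth (even_egf * fps_exp (1 - t)) N * fact N =
      (\<Sum>i\<le>N. real (N choose i) * (if even i then eulerian i t else 0) * (1 - t) ^ (N - i))"
    by (simp add: even_egf_def fps_nth_egf_times_exp)
  also have "\<dots> = (1 - t) * (\<Sum>i<N. (if even i \<and> 0 < i then real (N choose i) * eulerian i t *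
      (1 - t) ^ (N - 1 - i) else 0) + (if i = 0 then (1 - t) ^ (N - 1) else 0)) + (if even N then eulerian N t else 0)"
    unfolding sum_binomial_split_last
    by (intro arg_cong2[where f = "(+)"] arg_cong2[where f = "(*)"] sum.cong refl) (auto simp: eulerian_0)
  also have "\<dots> = (1 - t) * even_part_sum N + (1 - t) ^ N + (if even N then eulerian N t else 0)"
    using assms power_diff_Suc[of 0 N "1 - t"] by (simp add: sum.distrib even_part_sum_def algebra_simps)
  finally show ?thesis .
qed

lemma odd_part_relation:
  assumes "odd N"
  shows "(1 + t) * odd_part_sum N = (1 - t) * even_part_sum N"
proof -
  define X where "X = (1 + fps_const t) * (odd_egf * fps_exp (1 - t) - odd_egf)
    - (1 - fps_const t) * (even_egf * fps_exp (1 - t) - fps_exp (1 - t))"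
  have X_reflect: "X oo - fps_X = (1 + fps_const t) * (odd_egf - odd_egf * fps_exp (t - 1))
    - (1 - fps_const t) * (even_egf * fps_exp (t - 1) - fps_exp (t - 1))"
    by (simp add: X_def reflect_simps)
  have "(1 - fps_const t * fps_exp (1 - t)) * (1 - fps_const t * fps_exp (t - 1)) *
      (X - (X oo - fps_X)) = 0"
    unfolding X_reflect unfolding X_def
    by (rule reflection_identity_odd[OF egf_equation egf_equation_reflected exp_reflected_inverse])
  then have "X - (X oo - fps_X) = 0"
    by (rule cancel_egf_denominators)
  then have "X oo - fps_X = X"
    by simp
  moreover have "fps_nth (X oo - fps_X) N = - fps_nth X N"
    using assms by (simp add: fps_nth_reflect)
  ultimately have "fps_nth X N = 0"
    by simp
  moreover have "fps_nth X N * fact N =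
      (1 + t) * (fps_nth (odd_egf * fps_exp (1 - t)) N * fact N - fps_nth odd_egf N * fact N) -
      (1 - t) * (fps_nth (even_egf * fps_exp (1 - t)) N * fact N - fps_nth (fps_exp (1 - t)) N * fact N)"
    by (simp add: X_def ring_distribs)
  moreover have "fps_nth odd_egf N * fact N = eulerian N t"
    using assms by (simp add: odd_egf_def)
  ultimately have "(1 + t) * ((1 - t) * odd_part_sum N) - (1 - t) * ((1 - t) * even_part_sum N) = 0"
    using assms odd_pos[OF assms] by (simp add: odd_egf_times_exp_nth even_egf_times_exp_nth fps_exp_nth)
  then have "(1 - t) * ((1 + t) * odd_part_sum N - (1 - t) * even_part_sum N) = 0"
    by (simp add: algebra_simps)
  then show ?thesis
    using t_ne_1 by simp
qed

lemma even_part_relation: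
  assumes "even N" "N \<noteq> 0"
  shows "(1 - t) * odd_part_sum N = (1 + t) * even_part_sum N + 2 * (1 - t) ^ (N - 1)"
proof -
  define Y where "Y = (1 - fps_const t) * odd_egf * fps_exp (1 - t)
    - (1 + fps_const t) * (even_egf * fps_exp (1 - t) - even_egf - fps_exp (1 - t)) - 2 * fps_exp (1 - t)"
  have Y_reflect: "Y oo - fps_X = - ((1 - fps_const t) * odd_egf * fps_exp (t - 1))
    - (1 + fps_const t) * (even_egf * fps_exp (t - 1) - even_egf - fps_exp (t - 1)) - 2 * fps_exp (t - 1)"
    by (simp add: Y_def reflect_simps)
  have "(1 - fps_const t * fps_exp (1 - t)) * (1 - fps_const t * fps_exp (t - 1)) *
      (Y + (Y oo - fps_X) + 2 * (1 - fps_const t)) = 0"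
    unfolding Y_reflect unfolding Y_def
    by (rule reflection_identity_even[OF egf_equation egf_equation_reflected exp_reflected_inverse])
  then have "Y + (Y oo - fps_X) + 2 * (1 - fps_const t) = 0"
    by (rule cancel_egf_denominators)
  then have "fps_nth (Y + (Y oo - fps_X) + 2 * (1 - fps_const t)) N = 0"
    by simp
  moreover have "fps_nth (Y oo - fps_X) N = fps_nth Y N"
    using assms by (simp add: fps_nth_reflect)
  ultimately have "fps_nth Y N = 0"
    using assms by (simp add: fps_numeral_fps_const)
  moreover have "fps_nth Y N * fact N =
      (1 - t) * (fps_nth (odd_egf * fps_exp (1 - t)) N * fact N) -
      (1 + t) * (fps_nth (even_egf * fps_exp (1 - t)) N * fact N - fps_nth even_egf N * fact N -
        fps_nth (fps_exp (1 - t)) N * fact N) - 2 * (fps_nth (fps_exp (1 - t)) N * fact N)"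
    by (simp add: Y_def ring_distribs mult.assoc fps_numeral_fps_const)
  moreover have "fps_nth even_egf N * fact N = eulerian N t"
    using assms by (simp add: even_egf_def)
  moreover have "(1 - t) ^ N = (1 - t) * (1 - t) ^ (N - 1)"
    using assms(2) by (cases N) auto
  ultimately have "(1 - t) * ((1 - t) * odd_part_sum N) - (1 + t) * ((1 - t) * even_part_sum N)
      - 2 * ((1 - t) * (1 - t) ^ (N - 1)) = 0"
    using assms by (simp add: odd_egf_times_exp_nth even_egf_times_exp_nth fps_exp_nth)
  then have "(1 - t) * ((1 - t) * odd_part_sum N - (1 + t) * even_part_sum N - 2 * (1 - t) ^ (N - 1)) = 0"
    by (simp add: algebra_simps)
  then show ?thesis
    using t_ne_1 by simp
qed

lemma sum_by_parity:
  assumes "N \<noteq> 0"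
  shows "(\<Sum>m<N. real (N choose m) * eulerian m t * (1 - t) ^ (N - 1 - m) *
      (if m = 0 then w0 else if odd m then wo else we)) =
    w0 * (1 - t) ^ (N - 1) + wo * odd_part_sum N + we * even_part_sum N"
proof -
  define G where "G m = real (N choose m) * eulerian m t * (1 - t) ^ (N - 1 - m)" for m
  have "(\<Sum>m<N. G m * (if m = 0 then w0 else if odd m then wo else we)) =
      (\<Sum>m<N. (if m = 0 then G 0 * w0 else 0) + wo * (if odd m then G m else 0)
        + we * (if even m \<and> 0 < m then G m else 0))"
    by (intro sum.cong refl) auto
  also have "\<dots> = G 0 * w0 + wo * (\<Sum>m<N. if odd m then G m else 0) +
      we * (\<Sum>m<N. if even m \<and> 0 < m then G m else 0)"
    using assms by (simp add: sum.distrib sum_distrib_left)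
  also have "\<dots> = w0 * (1 - t) ^ (N - 1) + wo * odd_part_sum N + we * even_part_sum N"
    unfolding odd_part_sum_def even_part_sum_def G_def by (simp add: eulerian_0)
  finally show ?thesis
    by (simp only: G_def)
qed

lemma eulerian_by_parity:
  "N \<noteq> 0 \<Longrightarrow> eulerian N t = (1 - t) ^ (N - 1) + t * odd_part_sum N + t * even_part_sum N"
  using eulerian_recurrence[of N t] sum_by_parity[of N 1 t t]
  by (simp add: join_weight_def descent_weight_def if_distrib cong: if_cong)

lemma parity_sum_eq_if_balanced:
  assumes "N \<noteq> 0"
    and "(w0 - c) * (1 - t) ^ (N - 1) + (wo - c * t) * odd_part_sum N + (we - c * t) * even_part_sum N = 0"
  shows "(\<Sum>m<N. real (N choose m) * eulerian m t * (1 - t) ^ (N - 1 - m) *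
      (if m = 0 then w0 else if odd m then wo else we)) = c * eulerian N t"
proof -
  have "(\<Sum>m<N. real (N choose m) * eulerian m t * (1 - t) ^ (N - 1 - m) *
      (if m = 0 then w0 else if odd m then wo else we)) - c * eulerian N t =
    (w0 - c) * (1 - t) ^ (N - 1) + (wo - c * t) * odd_part_sum N + (we - c * t) * even_part_sum N"
    by (simp only: sum_by_parity[OF assms(1)] eulerian_by_parity[OF assms(1)]) (simp add: algebra_simps)
  then show ?thesis
    using assms(2) by simp
qed

lemma parity_sum_odd:
  assumes "odd N" and "(wo - c * t) * (1 - t) + (we - c * t) * (1 + t) = 0"
  shows "(\<Sum>m<N. real (N choose m) * eulerian m t * (1 - t) ^ (N - 1 - m) *
      (if m = 0 then c else if odd m then wo else we)) = c * eulerian N t"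
proof (rule parity_sum_eq_if_balanced)
  show N: "N \<noteq> 0"
    using odd_pos[OF assms(1)] by simp
  have "(1 - t) * ((wo - c * t) * odd_part_sum N + (we - c * t) * even_part_sum N) =
      (wo - c * t) * (1 - t) * odd_part_sum N + (we - c * t) * ((1 - t) * even_part_sum N)"
    by (simp add: algebra_simps)
  also have "\<dots> = (wo - c * t) * (1 - t) * odd_part_sum N + (we - c * t) * ((1 + t) * odd_part_sum N)"
    by (simp only: odd_part_relation[OF assms(1)])
  also have "\<dots> = ((wo - c * t) * (1 - t) + (we - c * t) * (1 + t)) * odd_part_sum N"
    by (simp add: algebra_simps)
  finally have "(1 - t) * ((wo - c * t) * odd_part_sum N + (we - c * t) * even_part_sum N) = 0"
    using assms(2) by simp
  then show "(c - c) * (1 - t) ^ (N - 1) + (wo - c * t) * odd_part_sum N + (we - c * t) * even_part_sum N = 0"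
    using t_ne_1 by simp
qed

lemma parity_sum_even:
  assumes "even N" "N \<noteq> 0"
    and "(w0 - c) * (1 - t) + 2 * (wo - c * t) = 0"
    and "(wo - c * t) * (1 + t) + (we - c * t) * (1 - t) = 0"
  shows "(\<Sum>m<N. real (N choose m) * eulerian m t * (1 - t) ^ (N - 1 - m) *
      (if m = 0 then w0 else if odd m then wo else we)) = c * eulerian N t"
proof (rule parity_sum_eq_if_balanced[OF assms(2)])
  have "(1 - t) * ((w0 - c) * (1 - t) ^ (N - 1) + (wo - c * t) * odd_part_sum N +
      (we - c * t) * even_part_sum N) =
      (w0 - c) * (1 - t) * (1 - t) ^ (N - 1) + (wo - c * t) * ((1 - t) * odd_part_sum N) +
      (we - c * t) * (1 - t) * even_part_sum N"
    by (simp add: algebra_simps)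
  also have "\<dots> = (w0 - c) * (1 - t) * (1 - t) ^ (N - 1) +
      (wo - c * t) * ((1 + t) * even_part_sum N + 2 * (1 - t) ^ (N - 1)) +
      (we - c * t) * (1 - t) * even_part_sum N"
    by (simp only: even_part_relation[OF assms(1,2)])
  also have "\<dots> = ((w0 - c) * (1 - t) + 2 * (wo - c * t)) * (1 - t) ^ (N - 1) +
      ((wo - c * t) * (1 + t) + (we - c * t) * (1 - t)) * even_part_sum N"
    by (simp add: algebra_simps)
  finally have "(1 - t) * ((w0 - c) * (1 - t) ^ (N - 1) + (wo - c * t) * odd_part_sum N +
      (we - c * t) * even_part_sum N) = 0"
    using assms(3,4) by simp
  then show "(w0 - c) * (1 - t) ^ (N - 1) + (wo - c * t) * odd_part_sum N + (we - c * t) * even_part_sum N = 0"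
    using t_ne_1 by simp
qed

end

section \<open>Rescaling \<open>A_n(p,q)\<close> to \<open>A_n(t)\<close>\<close>

lemma ascent_prod_by_pairs:
  fixes K :: real
  assumes K: "K\<^sup>2 = (1 - p) * (1 - q)" "K \<noteq> 0"
  shows "Suc m \<le> N \<Longrightarrow> ascent_prod p q (Suc m) N =
    K ^ (N - 1 - m) * (if even (N - 1 - m) then 1 else (1 - descent_weight p q (N - 1)) / K)"
proof (induction N rule: nat_induct_at_least)
  case base
  then show ?case
    by (simp add: ascent_prod_def)
next
  case (Suc N)
  define d where "d = N - 1 - m"
  have d: "Suc N - 1 - m = Suc d" "N - m = Suc d" "Suc N - 1 = N"
    using Suc.hyps by (auto simp: d_def)
  have "ascent_prod p q (Suc m) (Suc N) =
      K ^ d * (if even d then 1 else (1 - descent_weight p q (N - 1)) / K) * (1 - descent_weight p q N)"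
    using Suc by (simp add: ascent_prod_Suc d_def)
  also have "\<dots> = K ^ Suc d * (if even (Suc d) then 1 else (1 - descent_weight p q N) / K)"
  proof (cases "even d")
    case True
    then show ?thesis
      using K(2) by simp
  next
    case False
    have "(1 - descent_weight p q (N - 1)) * (1 - descent_weight p q N) = K * K"
      using Suc.hyps K(1) by (cases "odd N") (auto simp: descent_weight_def power2_eq_square)
    then have "K ^ d * ((1 - descent_weight p q (N - 1)) / K) * (1 - descent_weight p q N) = K ^ d * K"
      using K(2) by (simp add: mult.assoc)
    then show ?thesis
      using False by simp
  qed
  finally show ?case
    by (simp only: d)
qed

definition eulerian_scale :: "real \<Rightarrow> real \<Rightarrow> real \<Rightarrow> nat \<Rightarrow> real" where
  "eulerian_scale \<mu> q t N = (if N = 0 then 1 else if odd N then 1 / \<mu> else (1 + t) / (1 + q))"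

text \<open>The \<open>m\<close>-th term of the recurrence for \<open>A_N(p,q)\<close>, with \<open>A_m(p,q) = \<mu>^m c_m A_m(t)\<close> substituted,
  divided by \<open>\<mu>^(N-1)\<close> and by the \<open>m\<close>-th term \<open>C(N,m) A_m(t) (1 - t)^(N-1-m)\<close> of the Eulerian
  recurrence.\<close>

definition rescaled_weight :: "real \<Rightarrow> real \<Rightarrow> real \<Rightarrow> real \<Rightarrow> nat \<Rightarrow> nat \<Rightarrow> real" where
  "rescaled_weight p q t \<mu> N m =
    (if even (N - 1 - m) then 1 else (1 - descent_weight p q (N - 1)) / (\<mu> * (1 - t))) *
    join_weight p q m * eulerian_scale \<mu> q t m"

lemma rescaled_weight_sum_odd:
  fixes p q t \<mu> :: real
  assumes "\<mu> \<noteq> 0" "t \<noteq> 1" "1 + q \<noteq> 0"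
    and "\<mu>\<^sup>2 * (1 + t)\<^sup>2 = (1 + p) * (1 + q)" "2 * t * \<mu>\<^sup>2 = p + q"
    and "odd N"
  shows "(\<Sum>m<N. real (N choose m) * eulerian m t * (1 - t) ^ (N - 1 - m) *
    rescaled_weight p q t \<mu> N m) = eulerian N t"
proof -
  interpret eulerian_egf t
    by standard fact
  obtain k where k: "N = Suc (2 * k)"
    using \<open>odd N\<close> oddE by fastforce
  have "rescaled_weight p q t \<mu> N m = (if m = 0 then 1 else if odd m
      then (1 - q) / (\<mu> * (1 - t)) * p * (1 / \<mu>) else q * ((1 + t) / (1 + q)))" if "m < N" for m
    using that by (auto simp: k rescaled_weight_def join_weight_def descent_weight_def eulerian_scale_def)
  then have "(\<Sum>m<N. real (N choose m) * eulerian m t * (1 - t) ^ (N - 1 - m) *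
      rescaled_weight p q t \<mu> N m) =
    (\<Sum>m<N. real (N choose m) * eulerian m t * (1 - t) ^ (N - 1 - m) * (if m = 0 then 1 else if odd m
      then (1 - q) / (\<mu> * (1 - t)) * p * (1 / \<mu>) else q * ((1 + t) / (1 + q))))"
    by (intro sum.cong) auto
  also have "\<dots> = 1 * eulerian N t"
  proof (rule parity_sum_odd[OF \<open>odd N\<close>])
    show "((1 - q) / (\<mu> * (1 - t)) * p * (1 / \<mu>) - 1 * t) * (1 - t) +
        (q * ((1 + t) / (1 + q)) - 1 * t) * (1 + t) = 0"
      using assms(1-5) by (simp add: divide_simps) algebra
  qed
  finally show ?thesis
    by simp
qed

lemma rescaled_weight_sum_even:
  fixes p q t \<mu> :: real
  assumes "\<mu> \<noteq> 0" "t \<noteq> 1" "1 + q \<noteq> 0"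
    and "\<mu>\<^sup>2 * (1 + t)\<^sup>2 = (1 + p) * (1 + q)" "2 * t * \<mu>\<^sup>2 = p + q"
    and "even N" "N \<noteq> 0"
  shows "(\<Sum>m<N. real (N choose m) * eulerian m t * (1 - t) ^ (N - 1 - m) *
    rescaled_weight p q t \<mu> N m) = \<mu> * ((1 + t) / (1 + q)) * eulerian N t"
proof -
  interpret eulerian_egf t
    by standard fact
  obtain j where "N = 2 * j"
    using \<open>even N\<close> by (auto elim: evenE)
  with \<open>N \<noteq> 0\<close> obtain k where k: "N = Suc (Suc (2 * k))"
    by (cases j) auto
  have "rescaled_weight p q t \<mu> N m = (if m = 0 then (1 - p) / (\<mu> * (1 - t)) else if odd m
      then p / \<mu> else (1 - p) / (\<mu> * (1 - t)) * q * ((1 + t) / (1 + q)))" if "m < N" for m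
    using that by (auto simp: k rescaled_weight_def join_weight_def descent_weight_def eulerian_scale_def)
  then have "(\<Sum>m<N. real (N choose m) * eulerian m t * (1 - t) ^ (N - 1 - m) *
      rescaled_weight p q t \<mu> N m) =
    (\<Sum>m<N. real (N choose m) * eulerian m t * (1 - t) ^ (N - 1 - m) * (if m = 0 then (1 - p) / (\<mu> * (1 - t))
      else if odd m then p / \<mu> else (1 - p) / (\<mu> * (1 - t)) * q * ((1 + t) / (1 + q))))"
    by (intro sum.cong) auto
  also have "\<dots> = \<mu> * ((1 + t) / (1 + q)) * eulerian N t"
  proof (rule parity_sum_even[OF \<open>even N\<close> \<open>N \<noteq> 0\<close>])
    show "((1 - p) / (\<mu> * (1 - t)) - \<mu> * ((1 + t) / (1 + q))) * (1 - t) +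
        2 * (p / \<mu> - \<mu> * ((1 + t) / (1 + q)) * t) = 0"
      using assms(1-5) by (simp add: divide_simps) algebra
    show "(p / \<mu> - \<mu> * ((1 + t) / (1 + q)) * t) * (1 + t) +
        ((1 - p) / (\<mu> * (1 - t)) * q * ((1 + t) / (1 + q)) - \<mu> * ((1 + t) / (1 + q)) * t) * (1 - t) = 0"
      using assms(1-5) by (simp add: divide_simps) algebra
  qed
  finally show ?thesis .
qed

lemma Apq_eq_scaled_eulerian:
  fixes p q t \<mu> :: real
  assumes "\<mu> \<noteq> 0" "t \<noteq> 1" "1 + q \<noteq> 0"
    and minus: "\<mu>\<^sup>2 * (1 - t)\<^sup>2 = (1 - p) * (1 - q)" and plus: "\<mu>\<^sup>2 * (1 + t)\<^sup>2 = (1 + p) * (1 + q)"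
  shows "Apq N p q = \<mu> ^ N * eulerian_scale \<mu> q t N * eulerian N t"
proof -
  have sum: "2 * t * \<mu>\<^sup>2 = p + q"
    using plus minus by algebra
  define K where "K = \<mu> * (1 - t)"
  have K: "K\<^sup>2 = (1 - p) * (1 - q)" "K \<noteq> 0"
    using minus assms(1,2) by (simp_all add: K_def power_mult_distrib)
  show ?thesis
  proof (induction N rule: less_induct)
    case (less N)
    show ?case
    proof (cases "N = 0")
      case True
      then show ?thesis
        by (simp add: Apq_0 eulerian_0 eulerian_scale_def)
    next
      case False
      define G where "G m = real (N choose m) * eulerian m t * (1 - t) ^ (N - 1 - m)" for m
      have "real (N choose m) * ascent_prod p q (Suc m) N * join_weight p q m * Apq m p q =
          \<mu> ^ (N - 1) * (G m * rescaled_weight p q t \<mu> N m)" if "m < N" for m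
      proof -
        have "K ^ (N - 1 - m) * \<mu> ^ m = \<mu> ^ (N - 1) * (1 - t) ^ (N - 1 - m)"
          using that by (simp add: K_def power_mult_distrib power_add[symmetric])
        moreover have "ascent_prod p q (Suc m) N = K ^ (N - 1 - m) *
            (if even (N - 1 - m) then 1 else (1 - descent_weight p q (N - 1)) / (\<mu> * (1 - t)))"
          using ascent_prod_by_pairs[OF K, of m N] that by (simp add: K_def)
        ultimately show ?thesis
          using less.IH[OF that] by (simp add: G_def rescaled_weight_def mult_ac)
      qed
      then have "Apq N p q = \<mu> ^ (N - 1) * (\<Sum>m<N. G m * rescaled_weight p q t \<mu> N m)"
        using False by (simp add: Apq_recurrence sum_distrib_left)
      also have "(\<Sum>m<N. G m * rescaled_weight p q t \<mu> N m) = \<mu> * eulerian_scale \<mu> q t N * eulerian N t"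
        using rescaled_weight_sum_odd[OF assms(1-3) plus sum] rescaled_weight_sum_even[OF assms(1-3) plus sum]
          False assms(1) by (cases "odd N") (auto simp: G_def eulerian_scale_def)
      also have "\<mu> ^ (N - 1) * (\<mu> * eulerian_scale \<mu> q t N * eulerian N t) =
          \<mu> ^ N * eulerian_scale \<mu> q t N * eulerian N t"
        using False by (cases N) auto
      finally show ?thesis .
    qed
  qed
qed

lemma Apq_odd_even_scaled:
  fixes p q t \<kappa> :: real
  assumes "0 < \<kappa>" "t \<noteq> 1" "1 + q \<noteq> 0"
    and "\<kappa> * (1 - t)\<^sup>2 = (1 - p) * (1 - q)" "\<kappa> * (1 + t)\<^sup>2 = (1 + p) * (1 + q)"
  shows "Apq (2 * n + 1) p q = eulerian (2 * n + 1) t * \<kappa> ^ n"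
    and "Apq (2 * n + 2) p q = (1 + t) / (1 + q) * eulerian (2 * n + 2) t * \<kappa> ^ (n + 1)"
proof -
  define \<mu> where "\<mu> = sqrt \<kappa>"
  have \<mu>: "\<mu> \<noteq> 0" "\<mu>\<^sup>2 = \<kappa>"
    using assms(1) by (simp_all add: \<mu>_def)
  note scaled = Apq_eq_scaled_eulerian[OF \<mu>(1) assms(2,3), unfolded \<mu>(2), OF assms(4,5)]
  have "\<mu> ^ (2 * n + 1) * (1 / \<mu>) = \<kappa> ^ n"
    using \<mu> by (simp add: power_mult)
  then show "Apq (2 * n + 1) p q = eulerian (2 * n + 1) t * \<kappa> ^ n"
    using scaled[of "2 * n + 1"] by (simp add: eulerian_scale_def)
  have "\<mu> ^ (2 * n + 2) = \<kappa> ^ (n + 1)"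
    using \<mu>(2) power_mult[of \<mu> 2 "n + 1"] by simp
  then show "Apq (2 * n + 2) p q = (1 + t) / (1 + q) * eulerian (2 * n + 2) t * \<kappa> ^ (n + 1)"
    using scaled[of "2 * n + 2"] by (simp add: eulerian_scale_def)
qed

section \<open>The Catalan substitution\<close>

lemma catC_closed_form:
  assumes "z \<le> 1 / 4"
  shows "catC z = 2 / (1 + sqrt (1 - 4 * z))"
proof (cases "z = 0")
  case True
  then show ?thesis
    by (simp add: catC_def)
next
  case False
  define s where "s = sqrt (1 - 4 * z)"
  have "s\<^sup>2 = 1 - 4 * z" "0 \<le> s"
    using assms by (simp_all add: s_def)
  then have eq: "(1 - s) * (1 + s) = 4 * z" and nz: "1 + s \<noteq> 0"
    by (auto simp: algebra_simps power2_eq_square)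
  have "catC z = (1 - s) / (2 * z)"
    using False by (simp add: catC_def s_def)
  also have "\<dots> = 2 / (1 + s)"
    using False nz by (simp add: frac_eq_eq eq)
  finally show ?thesis
    by (simp add: s_def)
qed

lemma catC_equation:
  assumes "z \<le> 1 / 4"
  shows "catC z = 1 + z * (catC z)\<^sup>2"
proof -
  define s where "s = sqrt (1 - 4 * z)"
  have s: "s\<^sup>2 = 1 - 4 * z" "0 \<le> s"
    using assms by (simp_all add: s_def)
  then have "1 + s \<noteq> 0"
    by auto
  then have "2 / (1 + s) = 1 + z * (2 / (1 + s))\<^sup>2"
    using s(1) by (simp add: divide_simps) algebra
  then show ?thesis
    by (simp add: catC_closed_form[OF assms] s_def)
qed

lemma catC_bounds:
  assumes "z \<le> 1 / 4"
  shows "0 < catC z" "catC z \<le> 2"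
  using assms by (simp_all add: catC_closed_form field_simps add_pos_nonneg)

lemma small_pq_bounds:
  fixes p q :: real
  assumes "\<bar>p\<bar> < 1 / 4" "\<bar>q\<bar> < 1 / 4"
  defines "y \<equiv> (p + q) / (2 * (1 + p * q))"
  shows "15 / 16 < 1 + p * q" "\<bar>y\<bar> < 4 / 15"
proof -
  have "\<bar>p\<bar> * \<bar>q\<bar> \<le> \<bar>p\<bar> * (1 / 4)"
    using assms by (intro mult_left_mono) auto
  then have "\<bar>p * q\<bar> < 1 / 16"
    using assms by (simp add: abs_mult)
  then show u: "15 / 16 < 1 + p * q"
    by linarith
  have "\<bar>y\<bar> * (15 / 8) \<le> \<bar>y\<bar> * (2 * (1 + p * q))"
    using u by (intro mult_left_mono) auto
  also have "\<dots> = \<bar>p + q\<bar>"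
    using u by (simp add: y_def abs_divide)
  also have "\<dots> < 1 / 2"
    using assms by linarith
  finally show "\<bar>y\<bar> < 4 / 15"
    by linarith
qed

lemma catalan_parameters:
  fixes p q :: real
  assumes "\<bar>p\<bar> < 1 / 4" "\<bar>q\<bar> < 1 / 4"
  defines "y \<equiv> (p + q) / (2 * (1 + p * q))"
    and "C \<equiv> catC ((p + q)\<^sup>2 / (4 * (1 + p * q)\<^sup>2))"
  shows "0 < (1 + p * q) / C" "\<bar>y * C\<bar> < 1"
    and "(1 + p * q) / C * (1 - y * C)\<^sup>2 = (1 - p) * (1 - q)"
    and "(1 + p * q) / C * (1 + y * C)\<^sup>2 = (1 + p) * (1 + q)"
proof -
  note bounds = small_pq_bounds[OF assms(1,2), folded y_def]
  have y2: "y * (2 * (1 + p * q)) = p + q"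
    using bounds(1) by (simp add: y_def)
  have "\<bar>y\<bar> * \<bar>y\<bar> \<le> 1 / 2 * (1 / 2)"
    using bounds(2) by (intro mult_mono) auto
  then have z: "y\<^sup>2 \<le> 1 / 4"
    by (simp add: power2_eq_square)
  have "C = catC (y\<^sup>2)"
    by (simp add: C_def y_def power_divide power_mult_distrib del: distrib_left_numeral)
  then have C: "C = 1 + (y * C)\<^sup>2" "0 < C" "C \<le> 2"
    using catC_equation[OF z] catC_bounds[OF z] by (simp_all add: power_mult_distrib)
  show "0 < (1 + p * q) / C"
    using bounds(1) C(2) by simp
  have "\<bar>y * C\<bar> \<le> \<bar>y\<bar> * 2"
    using C by (simp add: abs_mult mult_left_mono)
  then show "\<bar>y * C\<bar> < 1"
    using bounds(2) by linarith
  have "2 * (y * C) * ((1 + p * q) / C) = p + q"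
    using C(2) y2 by (simp add: field_simps)
  moreover have "(1 + (y * C)\<^sup>2) * ((1 + p * q) / C) = 1 + p * q"
    using C by simp
  ultimately show "(1 + p * q) / C * (1 - y * C)\<^sup>2 = (1 - p) * (1 - q)"
    and "(1 + p * q) / C * (1 + y * C)\<^sup>2 = (1 + p) * (1 + q)"
    by algebra+
qed

theorem corollary2p3:
  fixes n :: nat
  shows "\<exists>\<epsilon>>0. \<forall>p q :: real. \<bar>p\<bar> < \<epsilon> \<and> \<bar>q\<bar> < \<epsilon> \<longrightarrow>
    (let y = (p + q) / (2 * (1 + p*q));
         Cs = catC ((p + q)^2 / (4 * (1 + p*q)^2))
     in Apq (2*n+1) p q = eulerian (2*n+1) (y * Cs) * ((1 + p*q) / Cs) ^ n
      \<and> Apq (2*n+2) p q = (1 + y * Cs) / (1 + q) * eulerian (2*n+2) (y * Cs) * ((1 + p*q) / Cs) ^ (n+1))"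
proof (intro exI[of _ "1 / 4"] conjI allI impI)
  fix p q :: real
  assume "\<bar>p\<bar> < 1 / 4 \<and> \<bar>q\<bar> < 1 / 4"
  then have small: "\<bar>p\<bar> < 1 / 4" "\<bar>q\<bar> < 1 / 4"
    by simp_all
  define y where "y = (p + q) / (2 * (1 + p * q))"
  define C where "C = catC ((p + q)\<^sup>2 / (4 * (1 + p * q)\<^sup>2))"
  note params = catalan_parameters[OF small, folded y_def C_def]
  have "y * C \<noteq> 1" "1 + q \<noteq> 0"
    using params(2) small by auto
  from Apq_odd_even_scaled[OF params(1) this params(3,4)]
  show "let y = (p + q) / (2 * (1 + p*q)); Cs = catC ((p + q)^2 / (4 * (1 + p*q)^2))
     in Apq (2*n+1) p q = eulerian (2*n+1) (y * Cs) * ((1 + p*q) / Cs) ^ n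
      \<and> Apq (2*n+2) p q = (1 + y * Cs) / (1 + q) * eulerian (2*n+2) (y * Cs) * ((1 + p*q) / Cs) ^ (n+1)"
    by (simp add: Let_def y_def C_def)
qed (simp)

end
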